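(* Let $m\ge 2$ be an integer and let $n$ be a positive integer with $m^j\le n<m^{j+1}$ for some integer $j\ge 0$, with base $m$ representation $n=\alpha_j m^j+\cdots+\alpha_1 m+\alpha_0$ ($\alpha_j>0$, $0\le\alpha_i\le m-1$). For $1\le i\le j$ let $\chi_i=0$ if $\alpha_{i-1}>0$ and $\chi_i=1$ if $\alpha_{i-1}=0$. Then \[ c_m(mn)\equiv \alpha_0+(\alpha_0-1)\sum_{i=1}^{j}(\alpha_1-\chi_1)(\alpha_2-\chi_2)\cdots(\alpha_i-\chi_i)\pmod m. \]
   Context: An $m$-ary partition of a positive integer $N$ is a partition of $N$ in which every part is a power of $m$. It is without gaps if, whenever $m^i$ is its largest part, every $m^k$ with $0\le k<i$ also appears as a part. $c_m(N)$ denotes the number of $m$-ary partitions of $N$ without gaps. *)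

theory Defs
  imports "HOL-Number_Theory.Cong"
begin

text \<open>An m-ary partition of N is encoded by its multiplicity function f, where f k is the
number of parts equal to m^k (for m \<ge> 2 the powers m^k are distinct, so this is a bijective
encoding).\<close>

definition mary_nogap_partitions :: "nat \<Rightarrow> nat \<Rightarrow> (nat \<Rightarrow> nat) set" where
  "mary_nogap_partitions m N =
     {f. \<exists>i. (\<forall>k\<le>i. 0 < f k) \<and> (\<forall>k>i. f k = 0) \<and> (\<Sum>k\<le>i. f k * m ^ k) = N}"

definition c :: "nat \<Rightarrow> nat \<Rightarrow> nat" where
  "c m N = card (mary_nogap_partitions m N)"

definition digit :: "nat \<Rightarrow> nat \<Rightarrow> nat \<Rightarrow> nat" where
  "digit m n i = n div m ^ i mod m"

definition chi :: "nat \<Rightarrow> nat \<Rightarrow> nat \<Rightarrow> int" where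
  "chi m n i = (if digit m n (i - 1) > 0 then 0 else 1)"

end

theory Submission
  imports Defs
begin

text \<open>Removing the parts equal to 1 from an m-ary partition of N + 1 without gaps and dividing the
remaining parts by m leaves either nothing or a partition without gaps of some k with m k \<le> N.
Hence c(N + 1) = S(N div m) for the partial sums S(q) = 1 + c(1) + ... + c(q), and
S(q + 1) = S(q) + S(q div m). Summing the latter over blocks of m consecutive indices gives
S(q) \<equiv> 1 + (q mod m) S(q div m) (mod m), so modulo m the number c(mn) = S(n - 1) is the nested
expression 1 + b0 (1 + b1 (1 + ...)) in the base-m digits b0, b1, ... of n - 1. These digits arise
from those of n by borrowing through the trailing zeros, which is what the corrections \<chi>i record.\<close>

lemma mary_nogap_partitions_0 [simp]: "mary_nogap_partitions m 0 = {}"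
  by (auto simp: mary_nogap_partitions_def)

lemma sum_case_nat_mult_power:
  "(\<Sum>t\<le>Suc i. case_nat a g t * m ^ t) = a + m * (\<Sum>t\<le>i. g t * (m::nat) ^ t)"
  by (simp del: sum.atMost_Suc add: sum.atMost_Suc_shift sum_distrib_left mult_ac)

lemma case_nat_in_mary_nogap_partitions:
  assumes "g \<in> mary_nogap_partitions m k" and "m * k < N"
  shows "case_nat (N - m * k) g \<in> mary_nogap_partitions m N"
proof -
  obtain i where pos: "\<forall>t\<le>i. 0 < g t" and zero: "\<forall>t>i. g t = 0"
    and sum: "(\<Sum>t\<le>i. g t * m ^ t) = k"
    using assms(1) unfolding mary_nogap_partitions_def by blast
  show ?thesis
    unfolding mary_nogap_partitions_def
  proof (intro CollectI exI[of _ "Suc i"] conjI allI impI)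
    show "0 < case_nat (N - m * k) g t" if "t \<le> Suc i" for t
      using that pos assms(2) by (cases t) auto
    show "case_nat (N - m * k) g t = 0" if "Suc i < t" for t
      using that zero by (cases t) auto
    show "(\<Sum>t\<le>Suc i. case_nat (N - m * k) g t * m ^ t) = N"
      unfolding sum_case_nat_mult_power using sum assms(2) by simp
  qed
qed

lemma mary_nogap_partitions_cases:
  assumes "f \<in> mary_nogap_partitions m N"
  obtains "f = case_nat N (\<lambda>_. 0)"
  | k g where "0 < k" "m * k < N" "g \<in> mary_nogap_partitions m k" "f = case_nat (N - m * k) g"
proof -
  obtain i where pos: "\<forall>t\<le>i. 0 < f t" and zero: "\<forall>t>i. f t = 0"
    and sum: "(\<Sum>t\<le>i. f t * m ^ t) = N"
    using assms unfolding mary_nogap_partitions_def by blast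
  show ?thesis
  proof (cases i)
    case 0
    then have "f = case_nat N (\<lambda>_. 0)"
      using zero sum by (auto split: nat.split)
    with that(1) show ?thesis .
  next
    case (Suc i')
    define g where "g = f \<circ> Suc"
    define k where "k = (\<Sum>t\<le>i'. g t * m ^ t)"
    have f_eq: "f = case_nat (f 0) g"
      by (auto simp: g_def split: nat.split)
    have N_eq: "N = f 0 + m * k"
      using sum Suc by (subst (asm) f_eq) (simp only: sum_case_nat_mult_power k_def)
    have g: "g \<in> mary_nogap_partitions m k"
      unfolding mary_nogap_partitions_def k_def g_def using pos zero Suc by (intro CollectI exI[of _ i']) auto
    have "0 < g 0 * m ^ 0" using pos Suc by (simp add: g_def)
    also have "\<dots> \<le> k" unfolding k_def by (rule member_le_sum) auto
    finally have "0 < k" .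
    moreover have "m * k < N" using N_eq pos by auto
    moreover have "f = case_nat (N - m * k) g" using f_eq N_eq by simp
    ultimately show ?thesis using that(2) g by blast
  qed
qed

lemma single_part_in_mary_nogap_partitions:
  "0 < N \<Longrightarrow> case_nat N (\<lambda>_. 0) \<in> mary_nogap_partitions m N"
  unfolding mary_nogap_partitions_def by (intro CollectI exI[of _ 0]) (auto split: nat.split)

lemma mary_nogap_partitions_Suc:
  assumes "0 < m"
  shows "mary_nogap_partitions m (Suc N) = insert (case_nat (Suc N) (\<lambda>_. 0))
           (\<Union>k\<in>{1..N div m}. case_nat (Suc N - m * k) ` mary_nogap_partitions m k)"
    (is "_ = ?R")
proof
  have range: "k \<in> {1..N div m} \<longleftrightarrow> 0 < k \<and> m * k < Suc N" for k
    using assms by (auto simp: less_Suc_eq_le less_eq_div_iff_mult_less_eq mult.commute)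
  show "mary_nogap_partitions m (Suc N) \<subseteq> ?R"
  proof
    fix f assume "f \<in> mary_nogap_partitions m (Suc N)"
    then show "f \<in> ?R"
      by (cases rule: mary_nogap_partitions_cases) (use range in blast)+
  qed
  show "?R \<subseteq> mary_nogap_partitions m (Suc N)"
    using range single_part_in_mary_nogap_partitions[of "Suc N" m]
      case_nat_in_mary_nogap_partitions[of _ m _ "Suc N"]
    by blast
qed

lemma finite_mary_nogap_partitions:
  assumes "0 < m"
  shows "finite (mary_nogap_partitions m N)"
proof (induction N rule: less_induct)
  case (less N)
  show ?case
  proof (cases N)
    case (Suc N')
    have "k < N" if "k \<in> {1..N' div m}" for k
      using that div_le_dividend[of N' m] Suc by (simp only: atLeastAtMost_iff) linarith
    then show ?thesis
      using less Suc by (simp add: mary_nogap_partitions_Suc[OF assms])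
  qed simp
qed

lemma inj_case_nat: "inj (case_nat a)"
  by (intro injI ext) (drule fun_cong[of _ _ "Suc _"], simp)

lemma c_Suc:
  assumes "0 < m"
  shows "c m (Suc N) = 1 + (\<Sum>k=1..N div m. c m k)"
proof -
  let ?A = "\<lambda>k. case_nat (Suc N - m * k) ` mary_nogap_partitions m k"
  have bound: "m * k \<le> N" if "k \<in> {1..N div m}" for k
    using that assms by (auto simp: less_eq_div_iff_mult_less_eq mult.commute)
  have disjoint: "?A k \<inter> ?A l = {}" if "k \<in> {1..N div m}" "l \<in> {1..N div m}" "k \<noteq> l" for k l
  proof -
    have "m * k \<noteq> m * l" using that assms by simp
    then have "Suc N - m * k \<noteq> Suc N - m * l"
      using bound[OF that(1)] bound[OF that(2)] by linarith
    then show ?thesis by (auto dest!: fun_cong[of _ _ 0])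
  qed
  have "case_nat (Suc N) (\<lambda>_. 0) \<notin> ?A k" for k
    using mary_nogap_partitions_def by (auto dest!: fun_cong[of _ _ 1])
  moreover have "card (?A k) = c m k" for k
    unfolding c_def by (rule card_image, rule inj_on_subset[OF inj_case_nat]) simp
  ultimately show ?thesis
    unfolding c_def mary_nogap_partitions_Suc[OF assms]
    using finite_mary_nogap_partitions[OF assms] disjoint
    by (simp add: card_UN_disjoint)
qed

definition c_sum :: "nat \<Rightarrow> nat \<Rightarrow> nat" where
  "c_sum m q = 1 + (\<Sum>k=1..q. c m k)"

lemma c_Suc_eq_c_sum: "0 < m \<Longrightarrow> c m (Suc N) = c_sum m (N div m)"
  by (simp add: c_Suc c_sum_def)

lemma c_mult_eq_c_sum:
  assumes "0 < m" and "0 < n"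
  shows "c m (m * n) = c_sum m (n - 1)"
proof -
  obtain n' where n: "n = Suc n'" using assms(2) by (cases n) auto
  have "m * n = Suc (m - 1 + n' * m)"
    using assms(1) unfolding n by simp
  then have "c m (m * n) = c_sum m ((m - 1 + n' * m) div m)"
    by (simp only: c_Suc_eq_c_sum[OF assms(1)])
  also have "(m - 1 + n' * m) div m = n - 1"
    using assms(1) unfolding n by (subst div_mult_self1) auto
  finally show ?thesis .
qed

lemma c_sum_Suc: "0 < m \<Longrightarrow> c_sum m (Suc q) = c_sum m q + c_sum m (q div m)"
  by (simp add: c_sum_def c_Suc)

lemma c_sum_eq_sum_div: "0 < m \<Longrightarrow> c_sum m q = 1 + (\<Sum>k<q. c_sum m (k div m))"
  by (induction q) (simp_all add: c_sum_Suc, simp add: c_sum_def)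

lemma sum_lessThan_div:
  fixes h :: "nat \<Rightarrow> 'a::comm_semiring_1"
  assumes "0 < m"
  shows "(\<Sum>k<q. h (k div m)) = of_nat m * (\<Sum>p<q div m. h p) + of_nat (q mod m) * h (q div m)"
proof (induction q)
  case (Suc q)
  show ?case
  proof (cases "Suc (q mod m) = m")
    case True
    then have "Suc q mod m = 0" "Suc q div m = Suc (q div m)"
      by (simp_all add: mod_Suc div_Suc)
    moreover have "of_nat m = 1 + (of_nat (q mod m) :: 'a)"
      using True by (metis of_nat_Suc)
    ultimately show ?thesis using Suc.IH by (simp add: algebra_simps)
  next
    case False
    then have "Suc q mod m = Suc (q mod m)" "Suc q div m = q div m"
      by (simp_all add: mod_Suc div_Suc)
    with Suc show ?thesis by (simp add: algebra_simps)
  qed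
qed simp

lemma c_sum_cong:
  assumes "0 < m"
  shows "[c_sum m q = 1 + q mod m * c_sum m (q div m)] (mod m)"
proof -
  have "c_sum m q = 1 + q mod m * c_sum m (q div m) + m * (\<Sum>p<q div m. c_sum m p)"
    using c_sum_eq_sum_div[OF assms, of q] sum_lessThan_div[OF assms, of "c_sum m" q] by simp
  then show ?thesis unfolding cong_def by simp
qed

fun nested_digits :: "nat \<Rightarrow> nat \<Rightarrow> nat \<Rightarrow> nat" where
  "nested_digits m 0 q = 1"
| "nested_digits m (Suc K) q = 1 + q mod m * nested_digits m K (q div m)"

lemma c_sum_cong_nested_digits:
  assumes "0 < m"
  shows "q < m ^ K \<Longrightarrow> [c_sum m q = nested_digits m K q] (mod m)"
proof (induction K arbitrary: q)
  case 0
  then show ?case by (simp add: c_sum_def)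
next
  case (Suc K)
  then have "q div m < m ^ K"
    using assms by (simp add: div_less_iff_less_mult mult.commute)
  then have "[c_sum m (q div m) = nested_digits m K (q div m)] (mod m)"
    by (rule Suc.IH)
  then have "[1 + q mod m * c_sum m (q div m) = nested_digits m (Suc K) q] (mod m)"
    by (simp only: nested_digits.simps cong_add_lcancel_nat cong_scalar_left)
  with c_sum_cong[OF assms] show ?case by (rule cong_trans)
qed

lemma digit_0 [simp]: "digit m n 0 = n mod m"
  by (simp add: digit_def)

lemma digit_Suc: "digit m n (Suc l) = digit m (n div m) l"
  by (simp add: digit_def div_mult2_eq)

lemma chi_1: "chi m n 1 = (if 0 < n mod m then 0 else 1)"
  by (simp add: chi_def)

lemma chi_Suc: "0 < l \<Longrightarrow> chi m n (Suc l) = chi m (n div m) l"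
  using digit_Suc[of m n "l - 1"] by (simp add: chi_def)

lemma sum_prod_atLeast1_Suc:
  fixes f :: "nat \<Rightarrow> 'a::comm_semiring_1"
  shows "(\<Sum>i\<le>Suc K. \<Prod>l=1..i. f l) = 1 + f 1 * (\<Sum>i\<le>K. \<Prod>l=1..i. f (Suc l))"
proof -
  have "(\<Prod>l=1..Suc i. f l) = f 1 * (\<Prod>l=Suc 1..Suc i. f l)" for i
    by (rule prod.atLeast_Suc_atMost) simp
  also have "(\<Prod>l=Suc 1..Suc i. f l) = (\<Prod>l=1..i. f (Suc l))" for i
    by (rule prod.shift_bounds_cl_Suc_ivl)
  finally have "(\<Prod>l=1..Suc i. f l) = f 1 * (\<Prod>l=1..i. f (Suc l))" for i .
  then show ?thesis
    by (simp del: sum.atMost_Suc add: sum.atMost_Suc_shift sum_distrib_left)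
qed

text \<open>The sum of the theorem with the term i = 0 (an empty product) included.\<close>

definition digit_chi_sum :: "nat \<Rightarrow> nat \<Rightarrow> nat \<Rightarrow> int" where
  "digit_chi_sum m K n = (\<Sum>i\<le>K. \<Prod>l=1..i. (int (digit m n l) - chi m n l))"

lemma digit_chi_sum_0 [simp]: "digit_chi_sum m 0 n = 1"
  by (simp add: digit_chi_sum_def)

lemma digit_chi_sum_eq_1_plus:
  "digit_chi_sum m K n = 1 + (\<Sum>i=1..K. \<Prod>l=1..i. (int (digit m n l) - chi m n l))"
  unfolding digit_chi_sum_def atMost_atLeast0 by (simp add: sum.atLeast_Suc_atMost)

lemma digit_chi_sum_Suc:
  "digit_chi_sum m (Suc K) n =
     1 + (int (n div m mod m) - (if 0 < n mod m then 0 else 1)) * digit_chi_sum m K (n div m)"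
proof -
  have "(\<Prod>l=1..i. (int (digit m n (Suc l)) - chi m n (Suc l))) =
        (\<Prod>l=1..i. (int (digit m (n div m) l) - chi m (n div m) l))" for i
    by (rule prod.cong) (simp_all add: digit_Suc chi_Suc)
  then show ?thesis
    unfolding digit_chi_sum_def sum_prod_atLeast1_Suc chi_1
    by (simp add: digit_Suc)
qed

lemma digit_chi_sum_eq_nested_digits:
  "0 < n mod m \<Longrightarrow> digit_chi_sum m K n = int (nested_digits m K (n div m))"
proof (induction K arbitrary: n)
  case (Suc K)
  then show ?case
    by (cases "0 < n div m mod m") (simp_all add: digit_chi_sum_Suc)
qed simp

lemma nested_digits_pred_not_dvd:
  assumes "0 < m" and "0 < n mod m"
  shows "int (nested_digits m (Suc K) (n - 1)) = 1 + (int (n mod m) - 1) * digit_chi_sum m K n"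
proof -
  have "n - 1 = (n mod m - 1) + n div m * m"
    using assms div_mult_mod_eq[of n m] by linarith
  moreover have "n mod m - 1 < m"
    using assms(1) by (simp add: less_imp_diff_less)
  ultimately have "(n - 1) mod m = n mod m - 1" "(n - 1) div m = n div m"
    by simp_all
  then show ?thesis
    using assms by (simp add: digit_chi_sum_eq_nested_digits)
qed

lemma div_gt_0_of_mod_eq_0: "0 < (n::nat) \<Longrightarrow> n mod m = 0 \<Longrightarrow> 0 < n div m"
  using div_mult_mod_eq[of n m] by (cases "n div m") auto

lemma nested_digits_pred_dvd_cong:
  assumes "0 < m" and "0 < n" and "n mod m = 0"
    and "[int (nested_digits m K (n div m - 1)) = digit_chi_sum m K n] (mod int m)"
  shows "[int (nested_digits m (Suc K) (n - 1)) = 1 + (int (n mod m) - 1) * digit_chi_sum m K n]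
           (mod int m)"
proof -
  obtain q where q: "n div m = Suc q"
    using div_gt_0_of_mod_eq_0[OF assms(2,3)] by (cases "n div m") auto
  have n: "n - 1 = (m - 1) + q * m"
    using assms(1,3) div_mult_mod_eq[of n m] unfolding q by simp
  have "(n - 1) mod m = m - 1"
    using assms(1) unfolding n mod_mult_self1 by simp
  moreover have "(n - 1) div m = n div m - 1"
    using assms(1) unfolding n q by (subst div_mult_self1) auto
  ultimately have "int (nested_digits m (Suc K) (n - 1)) =
             1 + (int m - 1) * int (nested_digits m K (n div m - 1))"
    using assms(1) by simp
  also have "[\<dots> = 1 + (0 - 1) * digit_chi_sum m K n] (mod int m)"
    using assms(4) by (intro cong_add cong_mult cong_refl) (simp_all add: cong_iff_dvd_diff)
  finally show ?thesis using assms(3) by simp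
qed

lemma nested_digits_pred_cong:
  assumes "0 < m" and "0 < n"
  shows "[int (nested_digits m (Suc K) (n - 1)) = 1 + (int (n mod m) - 1) * digit_chi_sum m K n]
           (mod int m)"
  using assms(2)
proof (induction K arbitrary: n)
  case 0
  then show ?case
    using nested_digits_pred_dvd_cong[OF assms(1), of n 0] nested_digits_pred_not_dvd[OF assms(1), of n 0]
    by (cases "n mod m = 0") simp_all
next
  case (Suc K)
  show ?case
  proof (cases "n mod m = 0")
    case True
    with Suc.prems have "0 < n div m"
      by (rule div_gt_0_of_mod_eq_0)
    then have "[int (nested_digits m (Suc K) (n div m - 1)) = digit_chi_sum m (Suc K) n] (mod int m)"
      using Suc.IH True by (simp add: digit_chi_sum_Suc)
    then show ?thesis
      using nested_digits_pred_dvd_cong[OF assms(1) Suc.prems True] by blast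
  next
    case False
    then show ?thesis by (simp only: nested_digits_pred_not_dvd[OF assms(1)] cong_refl neq0_conv)
  qed
qed

theorem theorem1p4:
  fixes m n j :: nat
  assumes "m \<ge> 2" and "0 < n" and "m ^ j \<le> n" and "n < m ^ (j + 1)"
  shows "[int (c m (m * n)) = int (digit m n 0) + (int (digit m n 0) - 1) *
            (\<Sum>i=1..j. \<Prod>l=1..i. (int (digit m n l) - chi m n l))] (mod int m)"
proof -
  have m: "0 < m" using assms(1) by simp
  have "[c m (m * n) = nested_digits m (Suc j) (n - 1)] (mod m)"
    unfolding c_mult_eq_c_sum[OF m assms(2)]
    using assms(4) by (intro c_sum_cong_nested_digits[OF m]) simp
  then have "[int (c m (m * n)) = int (nested_digits m (Suc j) (n - 1))] (mod int m)"
    by (simp only: cong_int_iff)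
  moreover have "[int (nested_digits m (Suc j) (n - 1)) = 1 + (int (n mod m) - 1) * digit_chi_sum m j n]
                   (mod int m)"
    by (rule nested_digits_pred_cong[OF m assms(2)])
  ultimately show ?thesis
    by (auto simp: digit_chi_sum_eq_1_plus algebra_simps dest: cong_trans)
qed

end
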